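(* Each of the following holds, where each larger space is regarded as a metric space with the supremum-norm metric: (i) $c$ is strongly lower porous in $\widehat{c}$; (ii) $c_0$ is strongly lower porous in $\widehat{c_0}$; (iii) $\widehat{c}$ is strongly lower porous in $S$; (iv) $\widehat{c_0}$ is strongly lower porous in $S_0$; (v) $S$ is strongly lower porous in $\ell^\infty$.
   Context: $\ell^\infty$ is the space of bounded real sequences with the sup norm; $c$ and $c_0$ are the subspaces of convergent sequences and sequences convergent to $0$. A Banach limit is a linear functional $L\colon\ell^\infty\to\mathbb R$ such that for every $(x_n)\in\ell^\infty$: (1) if $x_n\ge0$ for all $n$ then $L((x_n))\ge0$; (2) $L((x_2,x_3,\dots))=L((x_1,x_2,\dots))$; (3) $L((1,1,\dots))=1$. $\widehat{c}$ is the set of $x\in\ell^\infty$ for which there is $s\in\mathbb R$ with $L(x)=s$ for every Banach limit $L$; $\widehat{c_0}$ is the set of $x\in\ell^\infty$ with $L(x)=0$ for every Banach limit $L$. $S=\{x\in\ell^\infty\colon\lim_n\frac{x_1+\dots+x_n}{n}\text{ exists}\}$, $S_0=\{x\in\ell^\infty\colon\lim_n\frac{x_1+\dots+x_n}{n}=0\}$. In a metric space $(Y,d)$, with $B(x,r)=\{y\colon d(x,y)<r\}$ and, for $E\subset Y$, $\gamma(x,R,E)=\sup\{r>0\colon\exists z\in Y,\ B(z,r)\subset B(x,R)\setminus E\}$, the lower porosity of $E$ at $x$ is $2\liminf_{r\to0^+}\gamma(x,r,E)/r$; $E$ is strongly lower porous in $Y$ if its lower porosity equals $1$ at every point of $E$.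 *)

theory Defs
  imports "HOL-Analysis.Analysis" "HOL-Library.Liminf_Limsup"
begin

text \<open>Real sequences are functions nat => real; the paper's x_1, x_2, ... is x 0, x 1, ...\<close>

definition linf :: "(nat \<Rightarrow> real) set" where
  "linf = {x. \<exists>B. \<forall>n. \<bar>x n\<bar> \<le> B}"

definition supdist :: "(nat \<Rightarrow> real) \<Rightarrow> (nat \<Rightarrow> real) \<Rightarrow> real" where
  "supdist x y = (SUP n. \<bar>x n - y n\<bar>)"

definition seq_c :: "(nat \<Rightarrow> real) set" where
  "seq_c = {x. convergent x}"

definition seq_c0 :: "(nat \<Rightarrow> real) set" where
  "seq_c0 = {x. x \<longlonglongrightarrow> 0}"

text \<open>Banach limit: a linear functional on linf (values outside linf are irrelevant).\<close>
definition banach_limit :: "((nat \<Rightarrow> real) \<Rightarrow> real) \<Rightarrow> bool" where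
  "banach_limit L \<longleftrightarrow>
     (\<forall>x\<in>linf. \<forall>y\<in>linf. \<forall>a b. L (\<lambda>n. a * x n + b * y n) = a * L x + b * L y) \<and>
     (\<forall>x\<in>linf. (\<forall>n. x n \<ge> 0) \<longrightarrow> L x \<ge> 0) \<and>
     (\<forall>x\<in>linf. L (\<lambda>n. x (Suc n)) = L x) \<and>
     L (\<lambda>n. 1) = 1"

definition c_hat :: "(nat \<Rightarrow> real) set" where
  "c_hat = {x\<in>linf. \<exists>s. \<forall>L. banach_limit L \<longrightarrow> L x = s}"

definition c0_hat :: "(nat \<Rightarrow> real) set" where
  "c0_hat = {x\<in>linf. \<forall>L. banach_limit L \<longrightarrow> L x = 0}"

definition cesaro_mean :: "(nat \<Rightarrow> real) \<Rightarrow> nat \<Rightarrow> real" where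
  "cesaro_mean x n = (\<Sum>i\<le>n. x i) / real (Suc n)"

definition seq_S :: "(nat \<Rightarrow> real) set" where
  "seq_S = {x\<in>linf. convergent (cesaro_mean x)}"

definition seq_S0 :: "(nat \<Rightarrow> real) set" where
  "seq_S0 = {x\<in>linf. cesaro_mean x \<longlonglongrightarrow> 0}"

definition mball :: "'a set \<Rightarrow> ('a \<Rightarrow> 'a \<Rightarrow> real) \<Rightarrow> 'a \<Rightarrow> real \<Rightarrow> 'a set" where
  "mball Y d x r = {y\<in>Y. d x y < r}"

text \<open>gamma(x,R,E); the supremum of the empty set is taken to be 0.\<close>
definition por_gamma :: "'a set \<Rightarrow> ('a \<Rightarrow> 'a \<Rightarrow> real) \<Rightarrow> 'a \<Rightarrow> real \<Rightarrow> 'a set \<Rightarrow> ereal" where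
  "por_gamma Y d x R E =
     Sup (insert 0 {ereal r | r. r > 0 \<and> (\<exists>z\<in>Y. mball Y d z r \<subseteq> mball Y d x R - E)})"

definition lower_porosity :: "'a set \<Rightarrow> ('a \<Rightarrow> 'a \<Rightarrow> real) \<Rightarrow> 'a set \<Rightarrow> 'a \<Rightarrow> ereal" where
  "lower_porosity Y d E x = 2 * Liminf (at_right 0) (\<lambda>r. por_gamma Y d x r E / ereal r)"

definition strongly_lower_porous :: "'a set \<Rightarrow> ('a \<Rightarrow> 'a \<Rightarrow> real) \<Rightarrow> 'a set \<Rightarrow> bool" where
  "strongly_lower_porous Y d E \<longleftrightarrow> (\<forall>x\<in>E. lower_porosity Y d E x = 1)"

end

theory Submission
  imports Defs "HOL-Real_Asymp.Real_Asymp"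
begin

text \<open>
  Each ambient space Y is a linear subspace of l-infinity. Hence if x lies in E and a ball
  B(z, r) inside B(x, R) misses E, the point of the ray from x through z at distance R from x
  lies within R - d(x, z) <= R - r of z, which forces r <= R/2. Porosity 1 thus amounts to
  finding, for x in E and R > 0, a point z with d(x, z) <= R/2 whose R/2-ball misses E.

  We take z = x + (R/2) h for a sign sequence h in Y, together with a linear averaging operator
  T, contractive for the sup norm, that maps E into convergent sequences while T h has both 1
  and -1 as cluster values. For w in E, T(x - w) converges and |T(x - w) + (R/2) T h| <= d(z, w)
  pointwise, so passing to the limit along the two clusters gives d(z, w) >= R/2.

  For c and c0, T is the identity and h = (-1)^n, all of whose Banach limits vanish. For c-hat,
  h changes sign at the squares, so its Cesaro means tend to 0, and T averages over the windows
  [n^2, n^2 + n], where T h = (-1)^n; on c-hat every such window mean converges to the common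
  Banach limit, since limits of window means along free ultrafilters are themselves Banach
  limits. For S, h changes sign at the numbers 2^2^j, so its Cesaro means oscillate between
  values near 1 and -1.
\<close>

section \<open>Ultrafilters and limits along them\<close>

definition ultrafilter :: "'a filter \<Rightarrow> bool" where
  "ultrafilter U \<longleftrightarrow> U \<noteq> bot \<and> (\<forall>P. eventually P U \<or> eventually (\<lambda>x. \<not> P x) U)"

lemma ultrafilter_exists:
  assumes "F \<noteq> bot"
  shows "\<exists>U. ultrafilter U \<and> U \<le> F"
proof -
  define A where "A = {U. U \<noteq> bot \<and> U \<le> F}"
  have po: "partial_order_on A (relation_of (\<lambda>U V. V \<le> U) A)"
    by (auto simp: partial_order_on_def preorder_on_def refl_on_def trans_on_def antisym_on_def relation_of_def)
  have "\<exists>V\<in>A. \<forall>U\<in>C. V \<le> U" if C: "C \<in> Chains (relation_of (\<lambda>U V. V \<le> U) A)" for C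
  proof (cases "C = {}")
    case True
    then show ?thesis using assms A_def by auto
  next
    case False
    have CA: "C \<subseteq> A" and total: "\<And>U V. U \<in> C \<Longrightarrow> V \<in> C \<Longrightarrow> U \<le> V \<or> V \<le> U"
      using C by (auto simp: Chains_def relation_of_def)
    have "eventually P (Inf C) \<longleftrightarrow> (\<exists>U\<in>C. eventually P U)" for P
      using False by (rule eventually_Inf_base) (metis total inf.absorb1 inf.absorb2 order_refl)
    then have "Inf C \<noteq> bot"
      using CA A_def by (auto simp: eventually_False[symmetric])
    moreover have "Inf C \<le> F"
      using False CA A_def by (auto intro: Inf_lower2)
    ultimately show ?thesis
      using A_def by (auto intro: Inf_lower)
  qed
  then obtain U where U: "U \<in> A" and maximal: "\<And>V. V \<in> A \<Longrightarrow> V \<le> U \<Longrightarrow> V = U"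
    using predicate_Zorn[OF po] by blast
  have "eventually P U \<or> eventually (\<lambda>x. \<not> P x) U" for P
  proof (rule ccontr)
    assume none: "\<not> ?thesis"
    then have "inf U (principal {x. P x}) \<noteq> bot"
      by (auto simp: eventually_False[symmetric] eventually_inf_principal)
    moreover have "inf U (principal {x. P x}) \<le> F"
      using U unfolding A_def by (auto intro: le_infI1)
    ultimately have "inf U (principal {x. P x}) = U"
      by (intro maximal) (simp_all add: A_def)
    moreover have "eventually P (inf U (principal {x. P x}))"
      by (simp add: eventually_inf_principal)
    ultimately have "eventually P U"
      by simp
    with none show False by blast
  qed
  then show ?thesis
    using U unfolding A_def ultrafilter_def by auto
qed

lemma ultrafilter_nonbot: "ultrafilter U \<Longrightarrow> U \<noteq> bot"
  unfolding ultrafilter_def by blast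

lemma ultrafilter_Lim_eq: "ultrafilter U \<Longrightarrow> (f \<longlongrightarrow> l) U \<Longrightarrow> Lim U f = l"
  by (simp add: tendsto_Lim ultrafilter_nonbot)

lemma ultrafilter_tendsto_Lim:
  fixes f :: "'a \<Rightarrow> real"
  assumes U: "ultrafilter U" and bound: "\<And>x. \<bar>f x\<bar> \<le> B"
  shows "(f \<longlongrightarrow> Lim U f) U"
proof -
  have "eventually (\<lambda>y. y \<in> {-B..B}) (filtermap f U)"
    unfolding eventually_filtermap using bound by (intro always_eventually allI) (simp add: abs_le_iff minus_le_iff)
  moreover have "filtermap f U \<noteq> bot"
    using ultrafilter_nonbot[OF U] by (simp add: filtermap_bot_iff)
  ultimately obtain s where s: "inf (nhds s) (filtermap f U) \<noteq> bot"
    using compact_Icc unfolding compact_filter by blast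
  have "(f \<longlongrightarrow> s) U"
    unfolding tendsto_def
  proof (intro allI impI)
    fix S :: "real set"
    assume "open S" "s \<in> S"
    show "eventually (\<lambda>x. f x \<in> S) U"
    proof (rule ccontr)
      assume "\<not> eventually (\<lambda>x. f x \<in> S) U"
      then have "eventually (\<lambda>y. y \<notin> S) (filtermap f U)"
        using U unfolding ultrafilter_def by (auto simp: eventually_filtermap)
      moreover have "eventually (\<lambda>y. y \<in> S) (nhds s)"
        using \<open>open S\<close> \<open>s \<in> S\<close> by (rule eventually_nhds_in_open)
      ultimately have "eventually (\<lambda>y. False) (inf (nhds s) (filtermap f U))"
        unfolding eventually_inf by blast
      with s show False
        by (simp add: eventually_False)
    qed
  qed
  then show ?thesis
    using ultrafilter_Lim_eq[OF U, of f s] by simp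
qed

lemma tendsto_if_ultrafilter_tendsto:
  fixes f :: "nat \<Rightarrow> 'a :: topological_space"
  assumes "\<And>U. ultrafilter U \<Longrightarrow> U \<le> sequentially \<Longrightarrow> (f \<longlongrightarrow> s) U"
  shows "f \<longlonglongrightarrow> s"
  unfolding tendsto_def
proof (intro allI impI)
  fix S
  assume "open S" "s \<in> S"
  show "eventually (\<lambda>n. f n \<in> S) sequentially"
  proof (rule ccontr)
    assume "\<not> eventually (\<lambda>n. f n \<in> S) sequentially"
    then have "inf sequentially (principal {n. f n \<notin> S}) \<noteq> bot"
      by (simp add: eventually_False[symmetric] eventually_inf_principal)
    then obtain U where U: "ultrafilter U" "U \<le> inf sequentially (principal {n. f n \<notin> S})"
      using ultrafilter_exists by blast
    then have "eventually (\<lambda>n. f n \<in> S) U"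
      using assms \<open>open S\<close> \<open>s \<in> S\<close> unfolding tendsto_def by (meson le_infE)
    moreover have "eventually (\<lambda>n. f n \<notin> S) U"
      using filter_leD[OF U(2)] by (simp add: eventually_inf_principal)
    ultimately have "eventually (\<lambda>n. False) U"
      by (auto elim: eventually_elim2)
    with ultrafilter_nonbot[OF U(1)] show False
      by (simp add: eventually_False)
  qed
qed

section \<open>Banach limits and window means\<close>

lemma linfI: "(\<And>n. \<bar>x n\<bar> \<le> B) \<Longrightarrow> x \<in> linf"
  unfolding linf_def by blast

lemma const_in_linf: "(\<lambda>n. c) \<in> linf"
  by (rule linfI[of _ "\<bar>c\<bar>"]) simp

lemma lincomb_in_linf:
  assumes "x \<in> linf" "y \<in> linf"
  shows "(\<lambda>n. a * x n + b * y n) \<in> linf"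
proof -
  obtain A where A: "\<And>n. \<bar>x n\<bar> \<le> A"
    using assms(1) unfolding linf_def by blast
  obtain B where B: "\<And>n. \<bar>y n\<bar> \<le> B"
    using assms(2) unfolding linf_def by blast
  have "\<bar>a * x n + b * y n\<bar> \<le> \<bar>a\<bar> * A + \<bar>b\<bar> * B" for n
  proof -
    have "\<bar>a * x n + b * y n\<bar> \<le> \<bar>a\<bar> * \<bar>x n\<bar> + \<bar>b\<bar> * \<bar>y n\<bar>"
      by (metis abs_mult abs_triangle_ineq)
    also have "\<dots> \<le> \<bar>a\<bar> * A + \<bar>b\<bar> * B"
      by (intro add_mono mult_left_mono A B) auto
    finally show ?thesis .
  qed
  then show ?thesis
    by (rule linfI)
qed

lemma shift_in_linf: "x \<in> linf \<Longrightarrow> (\<lambda>n. x (n + k)) \<in> linf"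
  unfolding linf_def by blast

lemma convergent_in_linf:
  assumes "convergent x"
  shows "x \<in> linf"
proof -
  obtain K where "\<And>n. norm (x n) \<le> K"
    using convergent_imp_Bseq[OF assms] by (auto simp: Bseq_def)
  then show ?thesis
    by (intro linfI[of _ K]) simp
qed

lemma
  assumes "banach_limit L"
  shows banach_limit_lincomb: "x \<in> linf \<Longrightarrow> y \<in> linf \<Longrightarrow> L (\<lambda>n. a * x n + b * y n) = a * L x + b * L y"
    and banach_limit_nonneg: "x \<in> linf \<Longrightarrow> (\<And>n. x n \<ge> 0) \<Longrightarrow> L x \<ge> 0"
    and banach_limit_shift: "x \<in> linf \<Longrightarrow> L (\<lambda>n. x (Suc n)) = L x"
    and banach_limit_one: "L (\<lambda>n. 1) = 1"
  using assms unfolding banach_limit_def by blast+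

lemma banach_limit_const:
  assumes "banach_limit L"
  shows "L (\<lambda>n. c) = c"
  using banach_limit_lincomb[OF assms const_in_linf const_in_linf, of c 1 0 1]
  by (simp add: banach_limit_one[OF assms])

lemma banach_limit_mono:
  assumes L: "banach_limit L" and "x \<in> linf" "y \<in> linf" "\<And>n. x n \<le> y n"
  shows "L x \<le> L y"
proof -
  have "0 \<le> L (\<lambda>n. 1 * y n + (-1) * x n)"
    using assms by (intro banach_limit_nonneg[OF L] lincomb_in_linf) auto
  also have "\<dots> = L y - L x"
    using banach_limit_lincomb[OF L \<open>y \<in> linf\<close> \<open>x \<in> linf\<close>, of 1 "-1"] by simp
  finally show ?thesis
    by simp
qed

lemma banach_limit_shift_by:
  assumes L: "banach_limit L" and x: "x \<in> linf"
  shows "L (\<lambda>n. x (n + k)) = L x"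
proof (induction k)
  case (Suc k)
  then show ?case
    using banach_limit_shift[OF L shift_in_linf[OF x, of k]] by simp
qed simp

lemma banach_limit_tendsto:
  assumes L: "banach_limit L" and lim: "x \<longlonglongrightarrow> l"
  shows "L x = l"
proof -
  have x: "x \<in> linf"
    using lim by (auto intro: convergent_in_linf convergentI)
  have "\<bar>L x - l\<bar> \<le> e" if "e > 0" for e
  proof -
    obtain k where k: "\<And>n. n \<ge> k \<Longrightarrow> \<bar>x n - l\<bar> < e"
      using lim \<open>e > 0\<close> unfolding LIMSEQ_iff by auto
    have "l - e \<le> x (n + k)" "x (n + k) \<le> l + e" for n
      using k[of "n + k"] by auto
    then have "L (\<lambda>n. l - e) \<le> L (\<lambda>n. x (n + k))" "L (\<lambda>n. x (n + k)) \<le> L (\<lambda>n. l + e)"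
      by (simp_all add: banach_limit_mono[OF L] const_in_linf shift_in_linf[OF x])
    then show ?thesis
      using banach_limit_shift_by[OF L x, of k] by (simp add: banach_limit_const[OF L] abs_le_iff)
  qed
  then have "\<bar>L x - l\<bar> \<le> 0"
    by (rule field_le_epsilon) simp
  then show ?thesis
    by simp
qed

definition window_mean :: "(nat \<Rightarrow> nat) \<Rightarrow> (nat \<Rightarrow> real) \<Rightarrow> nat \<Rightarrow> real" where
  "window_mean m x n = (\<Sum>i<Suc n. x (m n + i)) / real (Suc n)"

lemma cesaro_mean_eq_window_mean: "cesaro_mean x = window_mean (\<lambda>n. 0) x"
  unfolding cesaro_mean_def window_mean_def by (simp add: lessThan_Suc_atMost fun_eq_iff)

lemma window_mean_lincomb:
  "window_mean m (\<lambda>i. a * x i + b * y i) = (\<lambda>n. a * window_mean m x n + b * window_mean m y n)"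
  unfolding window_mean_def
  by (simp add: fun_eq_iff sum.distrib sum_distrib_left add_divide_distrib del: sum.lessThan_Suc)

lemma cesaro_mean_lincomb:
  "cesaro_mean (\<lambda>i. a * x i + b * y i) = (\<lambda>n. a * cesaro_mean x n + b * cesaro_mean y n)"
  unfolding cesaro_mean_eq_window_mean by (rule window_mean_lincomb)

lemma window_mean_const: "window_mean m (\<lambda>i. c) = (\<lambda>n. c)"
  unfolding window_mean_def by (simp add: fun_eq_iff)

lemma window_mean_nonneg: "(\<And>i. x i \<ge> 0) \<Longrightarrow> window_mean m x n \<ge> 0"
  unfolding window_mean_def by (simp add: sum_nonneg)

lemma window_mean_abs_le:
  assumes "\<And>i. \<bar>x i\<bar> \<le> B"
  shows "\<bar>window_mean m x n\<bar> \<le> B"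
proof -
  have "\<bar>\<Sum>i<Suc n. x (m n + i)\<bar> \<le> (\<Sum>i<Suc n. B)"
    using assms by (intro order.trans[OF sum_abs] sum_mono) simp
  then show ?thesis
    unfolding window_mean_def by (simp add: field_simps del: sum.lessThan_Suc)
qed

lemma window_mean_shift_diff_tendsto_0:
  assumes "x \<in> linf"
  shows "(\<lambda>n. window_mean m (\<lambda>i. x (Suc i)) n - window_mean m x n) \<longlonglongrightarrow> 0"
proof -
  obtain B where B: "\<And>i. \<bar>x i\<bar> \<le> B"
    using assms unfolding linf_def by blast
  have "window_mean m (\<lambda>i. x (Suc i)) n - window_mean m x n
      = (x (m n + Suc n) - x (m n)) / real (Suc n)" for n
  proof -
    have "(\<Sum>i<Suc n. x (Suc (m n + i))) - (\<Sum>i<Suc n. x (m n + i)) = x (m n + Suc n) - x (m n)"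
      using sum_lessThan_telescope[of "\<lambda>i. x (m n + i)" "Suc n"]
      by (simp add: sum_subtractf del: sum.lessThan_Suc)
    then show ?thesis
      unfolding window_mean_def by (simp add: diff_divide_distrib[symmetric] del: sum.lessThan_Suc)
  qed
  moreover have "\<bar>x (m n + Suc n) - x (m n)\<bar> \<le> 2 * B" for n
    using B[of "m n + Suc n"] B[of "m n"] by linarith
  ultimately have "eventually (\<lambda>n. norm (window_mean m (\<lambda>i. x (Suc i)) n - window_mean m x n)
      \<le> 2 * B / real (Suc n)) sequentially"
    by (intro always_eventually allI) (simp add: divide_right_mono)
  moreover have "(\<lambda>n. 2 * B / real (Suc n)) \<longlonglongrightarrow> 0"
    using LIMSEQ_Suc[OF lim_const_over_n[of "2 * B"]] by simp
  ultimately show ?thesis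
    by (rule Lim_null_comparison)
qed

lemma window_mean_tendsto_Lim:
  assumes U: "ultrafilter U" and x: "x \<in> linf"
  shows "(window_mean m x \<longlongrightarrow> Lim U (window_mean m x)) U"
proof -
  obtain B where "\<And>i. \<bar>x i\<bar> \<le> B"
    using x unfolding linf_def by blast
  then show ?thesis
    by (intro ultrafilter_tendsto_Lim[OF U] window_mean_abs_le)
qed

lemma banach_limit_Lim_window_mean:
  assumes U: "ultrafilter U" "U \<le> sequentially"
  shows "banach_limit (\<lambda>x. Lim U (window_mean m x))"
  unfolding banach_limit_def
proof (intro conjI ballI allI impI)
  fix x y a b
  assume x: "x \<in> linf" and y: "y \<in> linf"
  have "((\<lambda>n. a * window_mean m x n + b * window_mean m y n)
          \<longlongrightarrow> a * Lim U (window_mean m x) + b * Lim U (window_mean m y)) U"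
    by (intro tendsto_intros window_mean_tendsto_Lim U(1) x y)
  then show "Lim U (window_mean m (\<lambda>n. a * x n + b * y n))
      = a * Lim U (window_mean m x) + b * Lim U (window_mean m y)"
    by (intro ultrafilter_Lim_eq[OF U(1)]) (simp add: window_mean_lincomb)
next
  fix x
  assume "x \<in> linf" "\<forall>n. 0 \<le> x n"
  then show "0 \<le> Lim U (window_mean m x)"
    using ultrafilter_nonbot[OF U(1)]
    by (intro tendsto_lowerbound[OF window_mean_tendsto_Lim[OF U(1)]] always_eventually)
       (auto simp: window_mean_nonneg)
next
  fix x
  assume x: "x \<in> linf"
  have "((\<lambda>n. window_mean m x n + (window_mean m (\<lambda>i. x (Suc i)) n - window_mean m x n))
      \<longlongrightarrow> Lim U (window_mean m x) + 0) U"
    by (intro tendsto_add window_mean_tendsto_Lim[OF U(1) x]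
        tendsto_mono[OF U(2) window_mean_shift_diff_tendsto_0[OF x]])
  then show "Lim U (window_mean m (\<lambda>n. x (Suc n))) = Lim U (window_mean m x)"
    by (simp add: ultrafilter_Lim_eq[OF U(1)])
next
  show "Lim U (window_mean m (\<lambda>n. 1)) = 1"
    using ultrafilter_Lim_eq[OF U(1) tendsto_const] by (simp add: window_mean_const)
qed

lemma window_mean_tendsto_banach_value:
  assumes x: "x \<in> linf" and s: "\<And>L. banach_limit L \<Longrightarrow> L x = s"
  shows "window_mean m x \<longlonglongrightarrow> s"
proof (rule tendsto_if_ultrafilter_tendsto)
  fix U :: "nat filter"
  assume U: "ultrafilter U" "U \<le> sequentially"
  have "Lim U (window_mean m x) = s"
    by (rule s[OF banach_limit_Lim_window_mean[OF U]])
  then show "(window_mean m x \<longlongrightarrow> s) U"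
    using window_mean_tendsto_Lim[OF U(1) x, where m = m] by simp
qed

lemma convergent_window_mean_c_hat: "x \<in> c_hat \<Longrightarrow> convergent (window_mean m x)"
  unfolding c_hat_def convergent_def by (blast intro: window_mean_tendsto_banach_value)

section \<open>The sequence spaces\<close>

definition lincomb_closed :: "(nat \<Rightarrow> real) set \<Rightarrow> bool" where
  "lincomb_closed Y \<longleftrightarrow> (\<forall>x\<in>Y. \<forall>y\<in>Y. \<forall>a b. (\<lambda>n. a * x n + b * y n) \<in> Y)"

lemma lincomb_closedD: "lincomb_closed Y \<Longrightarrow> x \<in> Y \<Longrightarrow> y \<in> Y \<Longrightarrow> (\<lambda>n. a * x n + b * y n) \<in> Y"
  unfolding lincomb_closed_def by blast

lemma lincomb_closed_linf: "lincomb_closed linf"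
  unfolding lincomb_closed_def using lincomb_in_linf by blast

lemma lincomb_closed_c_hat: "lincomb_closed c_hat"
  unfolding lincomb_closed_def
proof (intro ballI allI)
  fix x y a b
  assume "x \<in> c_hat" "y \<in> c_hat"
  then obtain s t where x: "x \<in> linf" "\<And>L. banach_limit L \<Longrightarrow> L x = s"
    and y: "y \<in> linf" "\<And>L. banach_limit L \<Longrightarrow> L y = t"
    unfolding c_hat_def by blast
  then have "\<And>L. banach_limit L \<Longrightarrow> L (\<lambda>n. a * x n + b * y n) = a * s + b * t"
    by (simp add: banach_limit_lincomb)
  then show "(\<lambda>n. a * x n + b * y n) \<in> c_hat"
    unfolding c_hat_def using lincomb_in_linf[OF x(1) y(1)] by blast
qed

lemma lincomb_closed_c0_hat: "lincomb_closed c0_hat"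
  unfolding lincomb_closed_def c0_hat_def
  by (auto simp: lincomb_in_linf banach_limit_lincomb)

lemma lincomb_closed_seq_S: "lincomb_closed seq_S"
  unfolding lincomb_closed_def
proof (intro ballI allI)
  fix x y a b
  assume "x \<in> seq_S" "y \<in> seq_S"
  then obtain s t where "x \<in> linf" "y \<in> linf" "cesaro_mean x \<longlonglongrightarrow> s" "cesaro_mean y \<longlonglongrightarrow> t"
    unfolding seq_S_def convergent_def by blast
  then have "(\<lambda>n. a * x n + b * y n) \<in> linf" "cesaro_mean (\<lambda>n. a * x n + b * y n) \<longlonglongrightarrow> a * s + b * t"
    unfolding cesaro_mean_lincomb by (auto intro: lincomb_in_linf tendsto_add tendsto_mult_left)
  then show "(\<lambda>n. a * x n + b * y n) \<in> seq_S"
    unfolding seq_S_def convergent_def by blast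
qed

lemma lincomb_closed_seq_S0: "lincomb_closed seq_S0"
  unfolding lincomb_closed_def
proof (intro ballI allI)
  fix x y a b
  assume "x \<in> seq_S0" "y \<in> seq_S0"
  then have "x \<in> linf" "y \<in> linf" and x0: "cesaro_mean x \<longlonglongrightarrow> 0" and y0: "cesaro_mean y \<longlonglongrightarrow> 0"
    unfolding seq_S0_def by auto
  then have "(\<lambda>n. a * x n + b * y n) \<in> linf" "cesaro_mean (\<lambda>n. a * x n + b * y n) \<longlonglongrightarrow> a * 0 + b * 0"
    unfolding cesaro_mean_lincomb
    using tendsto_add[OF tendsto_mult_left[OF x0] tendsto_mult_left[OF y0]]
    by (auto intro: lincomb_in_linf)
  then show "(\<lambda>n. a * x n + b * y n) \<in> seq_S0"
    unfolding seq_S0_def by simp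
qed

lemma c_hat_subset_linf: "c_hat \<subseteq> linf"
  unfolding c_hat_def by blast

lemma c0_hat_subset_linf: "c0_hat \<subseteq> linf"
  unfolding c0_hat_def by blast

lemma seq_S_subset_linf: "seq_S \<subseteq> linf"
  unfolding seq_S_def by blast

lemma seq_S0_subset_linf: "seq_S0 \<subseteq> linf"
  unfolding seq_S0_def by blast

lemma seq_c_subset_c_hat: "seq_c \<subseteq> c_hat"
proof
  fix x
  assume "x \<in> seq_c"
  then obtain l where l: "x \<longlonglongrightarrow> l"
    unfolding seq_c_def convergent_def by blast
  then have "x \<in> linf"
    by (intro convergent_in_linf convergentI)
  then show "x \<in> c_hat"
    unfolding c_hat_def using banach_limit_tendsto[OF _ l] by blast
qed

lemma seq_c0_subset_c0_hat: "seq_c0 \<subseteq> c0_hat"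
  unfolding seq_c0_def c0_hat_def
  using convergent_in_linf[OF convergentI] banach_limit_tendsto by blast

lemma c0_hat_subset_c_hat: "c0_hat \<subseteq> c_hat"
  unfolding c0_hat_def c_hat_def by blast

lemma c_hat_subset_seq_S: "c_hat \<subseteq> seq_S"
proof
  fix x
  assume "x \<in> c_hat"
  then obtain s where "x \<in> linf" "\<And>L. banach_limit L \<Longrightarrow> L x = s"
    unfolding c_hat_def by blast
  then have "cesaro_mean x \<longlonglongrightarrow> s"
    unfolding cesaro_mean_eq_window_mean by (rule window_mean_tendsto_banach_value)
  then show "x \<in> seq_S"
    unfolding seq_S_def convergent_def using \<open>x \<in> linf\<close> by blast
qed

lemma c0_hat_subset_seq_S0: "c0_hat \<subseteq> seq_S0"
  unfolding c0_hat_def seq_S0_def cesaro_mean_eq_window_mean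
  using window_mean_tendsto_banach_value by blast

lemma seq_S0_subset_seq_S: "seq_S0 \<subseteq> seq_S"
  unfolding seq_S0_def seq_S_def convergent_def by blast

section \<open>Porosity in linear subspaces of bounded sequences\<close>

lemma abs_le_supdist:
  assumes "x \<in> linf" "y \<in> linf"
  shows "\<bar>x n - y n\<bar> \<le> supdist x y"
proof -
  obtain A where A: "\<And>n. \<bar>x n\<bar> \<le> A"
    using assms(1) unfolding linf_def by blast
  obtain B where B: "\<And>n. \<bar>y n\<bar> \<le> B"
    using assms(2) unfolding linf_def by blast
  have "\<bar>x n - y n\<bar> \<le> A + B" for n
    using A[of n] B[of n] by linarith
  then have "bdd_above (range (\<lambda>n. \<bar>x n - y n\<bar>))"
    by (rule bdd_aboveI2)
  then show ?thesis
    unfolding supdist_def by (rule cSUP_upper[OF UNIV_I])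
qed

lemma supdist_le: "(\<And>n. \<bar>x n - y n\<bar> \<le> c) \<Longrightarrow> supdist x y \<le> c"
  unfolding supdist_def by (rule cSUP_least) auto

lemma supdist_commute: "supdist x y = supdist y x"
  unfolding supdist_def by (simp add: abs_minus_commute)

lemma supdist_triangle:
  assumes "x \<in> linf" "y \<in> linf" "z \<in> linf"
  shows "supdist x z \<le> supdist x y + supdist y z"
proof (rule supdist_le)
  fix n
  have "\<bar>x n - z n\<bar> \<le> \<bar>x n - y n\<bar> + \<bar>y n - z n\<bar>"
    by linarith
  also have "\<dots> \<le> supdist x y + supdist y z"
    using abs_le_supdist assms by (meson add_mono)
  finally show "\<bar>x n - z n\<bar> \<le> supdist x y + supdist y z" .
qed

lemma supdist_along_line:
  assumes "x \<in> linf" "y \<in> linf"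
  shows "supdist x (\<lambda>n. x n + c * (y n - x n)) = \<bar>c\<bar> * supdist x y"
proof (rule antisym)
  have dist_eq: "\<bar>x n - (x n + c * (y n - x n))\<bar> = \<bar>c\<bar> * \<bar>x n - y n\<bar>" for n
    by (simp add: abs_mult abs_minus_commute)
  show "supdist x (\<lambda>n. x n + c * (y n - x n)) \<le> \<bar>c\<bar> * supdist x y"
  proof (rule supdist_le)
    show "\<bar>x n - (x n + c * (y n - x n))\<bar> \<le> \<bar>c\<bar> * supdist x y" for n
      unfolding dist_eq using abs_le_supdist[OF assms] by (simp add: mult_left_mono)
  qed
  have w: "(\<lambda>n. x n + c * (y n - x n)) \<in> linf"
    using lincomb_in_linf[OF assms, of "1 - c" c] by (simp add: algebra_simps)
  show "\<bar>c\<bar> * supdist x y \<le> supdist x (\<lambda>n. x n + c * (y n - x n))"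
  proof (cases "c = 0")
    case False
    have "\<bar>x n - y n\<bar> \<le> supdist x (\<lambda>n. x n + c * (y n - x n)) / \<bar>c\<bar>" for n
      using abs_le_supdist[OF assms(1) w, of n] False unfolding dist_eq by (simp add: field_simps)
    then have "supdist x y \<le> supdist x (\<lambda>n. x n + c * (y n - x n)) / \<bar>c\<bar>"
      by (rule supdist_le)
    then show ?thesis
      using False by (simp add: field_simps)
  qed (use abs_le_supdist[OF assms(1) assms(1), of 0] in simp)
qed

lemma hole_radius_le_half:
  assumes Y: "Y \<subseteq> linf" "lincomb_closed Y" and x: "x \<in> E" "E \<subseteq> Y"
    and z: "z \<in> Y" and r: "r > 0"
    and hole: "mball Y supdist z r \<subseteq> mball Y supdist x R - E"
  shows "r \<le> R / 2"
proof (rule ccontr)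
  assume "\<not> r \<le> R / 2"
  have xY: "x \<in> Y" and xl: "x \<in> linf" and zl: "z \<in> linf"
    using x z Y by auto
  define d where "d = supdist x z"
  have "d \<ge> r"
    using hole x xY unfolding mball_def d_def by (force simp: supdist_commute)
  have "supdist z z \<le> 0"
    by (rule supdist_le) simp
  then have "z \<in> mball Y supdist z r"
    using z r unfolding mball_def by auto
  then have "d < R"
    using hole unfolding mball_def d_def by auto
  define w where "w = (\<lambda>n. x n + R / d * (z n - x n))"
  have "w = (\<lambda>n. (1 - R / d) * x n + R / d * z n)"
    unfolding w_def by (simp add: algebra_simps)
  then have wY: "w \<in> Y"
    using lincomb_closedD[OF Y(2) xY z, of "1 - R / d" "R / d"] by simp
  have "supdist z w = \<bar>R / d - 1\<bar> * supdist z x"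
    using supdist_along_line[OF zl xl, of "1 - R / d"] unfolding w_def
    by (simp add: algebra_simps abs_minus_commute)
  also have "\<dots> = R - d"
    using \<open>d \<ge> r\<close> r \<open>d < R\<close> by (simp add: d_def supdist_commute field_simps)
  finally have "w \<in> mball Y supdist z r"
    using wY \<open>d \<ge> r\<close> \<open>\<not> r \<le> R / 2\<close> unfolding mball_def by auto
  then have "supdist x w < R"
    using hole unfolding mball_def by auto
  moreover have "supdist x w = R"
    using supdist_along_line[OF xl zl, of "R / d"] \<open>d \<ge> r\<close> r \<open>d < R\<close>
    unfolding w_def d_def[symmetric] by simp
  ultimately show False
    by simp
qed

lemma por_gamma_le_half:
  assumes "Y \<subseteq> linf" "lincomb_closed Y" "x \<in> E" "E \<subseteq> Y" "R > 0"
  shows "por_gamma Y supdist x R E \<le> ereal (R / 2)"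
  unfolding por_gamma_def
  using hole_radius_le_half[OF assms(1-4)] \<open>R > 0\<close> by (auto intro!: Sup_least)

lemma por_gamma_ge_half:
  assumes Y: "Y \<subseteq> linf" and "x \<in> Y" "z \<in> Y" "supdist x z \<le> R / 2" "R > 0"
    and hole: "mball Y supdist z (R / 2) \<inter> E = {}"
  shows "ereal (R / 2) \<le> por_gamma Y supdist x R E"
proof -
  have "mball Y supdist z (R / 2) \<subseteq> mball Y supdist x R - E"
  proof
    fix w
    assume w: "w \<in> mball Y supdist z (R / 2)"
    then have "supdist x w \<le> supdist x z + supdist z w"
      using assms Y unfolding mball_def by (intro supdist_triangle) auto
    then show "w \<in> mball Y supdist x R - E"
      using w hole \<open>supdist x z \<le> R / 2\<close> unfolding mball_def by auto
  qed
  then have "ereal (R / 2) \<in> {ereal r | r. r > 0 \<and> (\<exists>z\<in>Y. mball Y supdist z r \<subseteq> mball Y supdist x R - E)}"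
    using \<open>z \<in> Y\<close> \<open>R > 0\<close> by (intro CollectI exI[of _ "R / 2"]) auto
  then show ?thesis
    unfolding por_gamma_def by (intro Sup_upper insertI2)
qed

lemma strongly_lower_porousI:
  assumes Y: "Y \<subseteq> linf" "lincomb_closed Y" "E \<subseteq> Y"
    and holes: "\<And>x R. x \<in> E \<Longrightarrow> R > 0 \<Longrightarrow>
      \<exists>z\<in>Y. supdist x z \<le> R / 2 \<and> mball Y supdist z (R / 2) \<inter> E = {}"
  shows "strongly_lower_porous Y supdist E"
  unfolding strongly_lower_porous_def lower_porosity_def
proof
  fix x
  assume x: "x \<in> E"
  have "por_gamma Y supdist x R E = ereal (R / 2)" if R: "R > 0" for R
  proof (rule antisym)
    show "por_gamma Y supdist x R E \<le> ereal (R / 2)"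
      using por_gamma_le_half[OF Y(1,2) x Y(3) R] .
    obtain z where "z \<in> Y" "supdist x z \<le> R / 2" "mball Y supdist z (R / 2) \<inter> E = {}"
      using holes[OF x R] by blast
    then show "ereal (R / 2) \<le> por_gamma Y supdist x R E"
      using x Y R by (intro por_gamma_ge_half) auto
  qed
  then have "eventually (\<lambda>R. por_gamma Y supdist x R E / ereal R = ereal (1 / 2)) (at_right 0)"
    using eventually_at_right_less[of 0] by (auto elim: eventually_mono)
  then have "Liminf (at_right 0) (\<lambda>R. por_gamma Y supdist x R E / ereal R)
      = Liminf (at_right (0::real)) (\<lambda>_. ereal (1 / 2))"
    by (rule Liminf_eq)
  also have "\<dots> = ereal (1 / 2)"
    by (simp add: Liminf_const)
  finally show "2 * Liminf (at_right 0) (\<lambda>R. por_gamma Y supdist x R E / ereal R) = 1"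
    by simp
qed

definition cluster_value :: "(nat \<Rightarrow> real) \<Rightarrow> real \<Rightarrow> bool" where
  "cluster_value a \<sigma> \<longleftrightarrow> (\<exists>r. strict_mono r \<and> (\<lambda>k. a (r k)) \<longlonglongrightarrow> \<sigma>)"

lemma abs_le_if_cluster_values:
  fixes a v :: "nat \<Rightarrow> real"
  assumes bound: "\<And>n. \<bar>v n + c * a n\<bar> \<le> d" and "convergent v"
    and "cluster_value a 1" "cluster_value a (-1)"
  shows "\<bar>c\<bar> \<le> d"
proof -
  obtain l where v: "v \<longlonglongrightarrow> l"
    using \<open>convergent v\<close> unfolding convergent_def by blast
  have "\<bar>l + c * \<sigma>\<bar> \<le> d" if \<sigma>: "cluster_value a \<sigma>" for \<sigma>
  proof -
    obtain r where "strict_mono r" "(\<lambda>k. a (r k)) \<longlonglongrightarrow> \<sigma>"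
      using \<sigma> unfolding cluster_value_def by blast
    then have "(\<lambda>k. \<bar>v (r k) + c * a (r k)\<bar>) \<longlonglongrightarrow> \<bar>l + c * \<sigma>\<bar>"
      using LIMSEQ_subseq_LIMSEQ[OF v] by (intro tendsto_intros) (auto simp: o_def)
    then show ?thesis
      by (rule tendsto_upperbound) (simp_all add: bound)
  qed
  from this[OF \<open>cluster_value a 1\<close>] this[OF \<open>cluster_value a (-1)\<close>] show ?thesis
    by linarith
qed

lemma strongly_lower_porous_by_oscillation:
  fixes T :: "(nat \<Rightarrow> real) \<Rightarrow> nat \<Rightarrow> real"
  assumes Y: "Y \<subseteq> linf" "lincomb_closed Y" "E \<subseteq> Y"
    and h: "h \<in> Y" "\<And>n. \<bar>h n\<bar> \<le> 1"
    and T_lincomb: "\<And>u v a b. T (\<lambda>i. a * u i + b * v i) = (\<lambda>n. a * T u n + b * T v n)"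
    and T_abs_le: "\<And>u \<delta> n. (\<And>i. \<bar>u i\<bar> \<le> \<delta>) \<Longrightarrow> \<bar>T u n\<bar> \<le> \<delta>"
    and T_convergent: "\<And>x. x \<in> E \<Longrightarrow> convergent (T x)"
    and clusters: "cluster_value (T h) 1" "cluster_value (T h) (-1)"
  shows "strongly_lower_porous Y supdist E"
proof (rule strongly_lower_porousI[OF Y])
  fix x and R :: real
  assume x: "x \<in> E" and "R > 0"
  define z where "z = (\<lambda>n. x n + R / 2 * h n)"
  have "z \<in> Y"
    using lincomb_closedD[OF Y(2) _ h(1), of x 1 "R / 2"] x Y(3) by (auto simp: z_def)
  have "supdist x z \<le> R / 2"
    unfolding z_def using h(2) \<open>R > 0\<close> by (intro supdist_le) (simp add: abs_mult mult_left_le)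
  moreover have "w \<notin> E" if w: "w \<in> mball Y supdist z (R / 2)" for w
  proof
    assume "w \<in> E"
    define \<delta> where "\<delta> = supdist z w"
    have "\<bar>z i - w i\<bar> \<le> \<delta>" for i
      unfolding \<delta>_def using \<open>z \<in> Y\<close> w Y unfolding mball_def by (intro abs_le_supdist) auto
    then have "\<bar>(T x n - T w n) + R / 2 * T h n\<bar> \<le> \<delta>" for n
      using T_abs_le[of "\<lambda>i. 1 * (1 * x i + (-1) * w i) + R / 2 * h i" \<delta> n]
      unfolding T_lincomb by (simp add: z_def algebra_simps)
    moreover have "convergent (\<lambda>n. T x n - T w n)"
      using T_convergent[OF x] T_convergent[OF \<open>w \<in> E\<close>] by (rule convergent_diff)
    ultimately have "\<bar>R / 2\<bar> \<le> \<delta>"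
      using clusters by (rule abs_le_if_cluster_values)
    then show False
      using w \<open>R > 0\<close> unfolding mball_def \<delta>_def by simp
  qed
  ultimately show "\<exists>z\<in>Y. supdist x z \<le> R / 2 \<and> mball Y supdist z (R / 2) \<inter> E = {}"
    using \<open>z \<in> Y\<close> by blast
qed

section \<open>Sign sequences with oscillating means\<close>

definition alternating :: "nat \<Rightarrow> real" where
  "alternating n = (-1) ^ n"

lemma cluster_value_alternating: "cluster_value alternating 1" "cluster_value alternating (-1)"
proof -
  have "cluster_value alternating ((-1) ^ e)" for e
    unfolding cluster_value_def
  proof (intro exI conjI)
    show "strict_mono (\<lambda>k. 2 * k + e)"
      by (rule strict_monoI) simp
    show "(\<lambda>k. alternating (2 * k + e)) \<longlonglongrightarrow> (-1) ^ e"
      by (simp add: alternating_def power_add)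
  qed
  from this[of 0] this[of 1] show "cluster_value alternating 1" "cluster_value alternating (-1)"
    by simp_all
qed

lemma alternating_in_c0_hat: "alternating \<in> c0_hat"
  unfolding c0_hat_def
proof (intro CollectI conjI allI impI)
  show alt: "alternating \<in> linf"
    by (rule linfI[of _ 1]) (simp add: alternating_def)
  fix L
  assume L: "banach_limit L"
  have "L alternating = L (\<lambda>n. alternating (Suc n))"
    using banach_limit_shift[OF L alt] by simp
  also have "\<dots> = L (\<lambda>n. (-1) * alternating n + 0 * alternating n)"
    by (simp add: alternating_def)
  also have "\<dots> = - L alternating"
    using banach_limit_lincomb[OF L alt alt, of "-1" 0] by simp
  finally show "L alternating = 0"
    by simp
qed

definition square_blocks :: "nat \<Rightarrow> real" where
  "square_blocks n = (-1) ^ floor_sqrt n"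

lemma square_blocks_eq: "K\<^sup>2 \<le> i \<Longrightarrow> i < (Suc K)\<^sup>2 \<Longrightarrow> square_blocks i = (-1) ^ K"
  unfolding square_blocks_def using floor_sqrt_unique by simp

lemma abs_square_blocks [simp]: "\<bar>square_blocks n\<bar> = 1"
  unfolding square_blocks_def by simp

lemma sum_square_blocks_lessThan_square: "(\<Sum>i<K\<^sup>2. square_blocks i) = (-1) ^ Suc K * real K"
proof (induction K)
  case (Suc K)
  have le: "K\<^sup>2 \<le> (Suc K)\<^sup>2"
    by (simp add: power2_eq_square)
  have "(\<Sum>i<(Suc K)\<^sup>2. square_blocks i)
      = (\<Sum>i<K\<^sup>2. square_blocks i) + (\<Sum>i\<in>{K\<^sup>2..<(Suc K)\<^sup>2}. square_blocks i)"
    using sum.atLeastLessThan_concat[OF _ le, of 0 square_blocks] by (simp add: atLeast0LessThan)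
  also have "(\<Sum>i\<in>{K\<^sup>2..<(Suc K)\<^sup>2}. square_blocks i) = (\<Sum>i\<in>{K\<^sup>2..<(Suc K)\<^sup>2}. (-1) ^ K)"
    by (rule sum.cong) (simp_all add: square_blocks_eq)
  also have "\<dots> = (2 * real K + 1) * (-1) ^ K"
    using le by (simp add: of_nat_diff power2_eq_square algebra_simps)
  finally show ?case
    using Suc by (simp add: algebra_simps)
qed simp

lemma abs_sum_square_blocks_le: "\<bar>\<Sum>i\<le>n. square_blocks i\<bar> \<le> 3 * real (floor_sqrt n) + 1"
proof -
  define K where "K = floor_sqrt n"
  define tail where "tail = (\<Sum>i\<in>{K\<^sup>2..<Suc n}. square_blocks i)"
  have K: "K\<^sup>2 \<le> Suc n" "Suc n \<le> K\<^sup>2 + 2 * K + 1"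
    using Suc_floor_sqrt_power2_gt[of n] floor_sqrt_power2_le[of n]
    unfolding K_def by (simp_all add: power2_eq_square)
  have "(\<Sum>i\<le>n. square_blocks i) = (\<Sum>i<K\<^sup>2. square_blocks i) + tail"
    using sum.atLeastLessThan_concat[OF _ K(1), of 0 square_blocks]
    by (simp add: tail_def atLeast0LessThan lessThan_Suc_atMost)
  also have "\<dots> = (-1) ^ Suc K * real K + tail"
    by (simp only: sum_square_blocks_lessThan_square)
  finally have "\<bar>\<Sum>i\<le>n. square_blocks i\<bar> \<le> real K + \<bar>tail\<bar>"
    using abs_triangle_ineq[of "(-1) ^ Suc K * real K" tail] by (simp add: abs_mult)
  moreover have "\<bar>tail\<bar> \<le> real (Suc n - K\<^sup>2)"
    using sum_abs[of square_blocks "{K\<^sup>2..<Suc n}"] by (simp add: tail_def)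
  ultimately show ?thesis
    using K unfolding K_def by linarith
qed

lemma square_blocks_in_seq_S0: "square_blocks \<in> seq_S0"
  unfolding seq_S0_def
proof (intro CollectI conjI)
  show "square_blocks \<in> linf"
    by (rule linfI[of _ 1]) simp
  show "cesaro_mean square_blocks \<longlonglongrightarrow> 0"
  proof (rule Lim_null_comparison)
    have "real (floor_sqrt n) \<le> sqrt (real n)" for n
      using floor_sqrt_power2_le[of n] by (intro real_le_rsqrt) (simp flip: of_nat_power)
    then have "\<bar>\<Sum>i\<le>n. square_blocks i\<bar> \<le> 3 * sqrt (real n) + 1" for n
      using abs_sum_square_blocks_le[of n] by (smt (verit))
    then show "eventually (\<lambda>n. norm (cesaro_mean square_blocks n) \<le> (3 * sqrt (real n) + 1) / real (Suc n)) sequentially"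
      unfolding cesaro_mean_def by (intro always_eventually allI) (simp add: divide_right_mono)
    show "(\<lambda>n. (3 * sqrt (real n) + 1) / real (Suc n)) \<longlonglongrightarrow> 0"
      by real_asymp
  qed
qed

lemma window_mean_square_blocks: "window_mean power2 square_blocks = alternating"
proof
  fix n
  have "square_blocks (n\<^sup>2 + i) = (-1) ^ n" if "i < Suc n" for i
    using that by (intro square_blocks_eq) (auto simp: power2_eq_square)
  then show "window_mean power2 square_blocks n = alternating n"
    unfolding window_mean_def alternating_def by simp
qed

definition double_exp_blocks :: "nat \<Rightarrow> real" where
  "double_exp_blocks n = (-1) ^ floor_log (floor_log n)"

lemma abs_double_exp_blocks [simp]: "\<bar>double_exp_blocks n\<bar> = 1"
  unfolding double_exp_blocks_def by simp

lemma double_exp_blocks_eq: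
  assumes "2 ^ 2 ^ j \<le> i" "i < 2 ^ 2 ^ Suc j"
  shows "double_exp_blocks i = (-1) ^ j"
proof -
  have "(0::nat) < 2 ^ 2 ^ j"
    by simp
  then have "i > 0"
    using assms(1) by linarith
  have "2 ^ j \<le> floor_log i"
    using floor_log_le_iff[OF assms(1)] by simp
  moreover have "(2::nat) ^ floor_log i < 2 ^ 2 ^ Suc j"
    using floor_log_exp2_le[OF \<open>i > 0\<close>] assms(2) by linarith
  then have "floor_log i < 2 ^ Suc j"
    by simp
  ultimately have "floor_log (floor_log i) = j"
    by (intro floor_log_eqI) auto
  then show ?thesis
    unfolding double_exp_blocks_def by simp
qed

lemma abs_sum_minus_const_le:
  fixes h :: "nat \<Rightarrow> real"
  assumes "\<And>i. \<bar>h i\<bar> \<le> 1" "\<bar>\<sigma>\<bar> = 1" "\<And>i. a \<le> i \<Longrightarrow> i \<le> n \<Longrightarrow> h i = \<sigma>"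
  shows "\<bar>(\<Sum>i\<le>n. h i) - real (Suc n) * \<sigma>\<bar> \<le> 2 * real a"
proof -
  have "\<bar>(\<Sum>i\<le>n. h i) - real (Suc n) * \<sigma>\<bar> \<le> (\<Sum>i\<le>n. \<bar>h i - \<sigma>\<bar>)"
    using sum_abs[of "\<lambda>i. h i - \<sigma>" "{..n}"] by (simp add: sum_subtractf)
  also have "\<dots> \<le> (\<Sum>i\<le>n. if i < a then 2 else 0)"
  proof (rule sum_mono)
    fix i
    assume "i \<in> {..n}"
    then show "\<bar>h i - \<sigma>\<bar> \<le> (if i < a then 2 else 0)"
      using abs_triangle_ineq4[of "h i" \<sigma>] assms(1)[of i] assms(2,3) by auto
  qed
  also have "\<dots> = 2 * real (card ({..n} \<inter> {i. i < a}))"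
    by (simp add: sum.If_cases)
  also have "\<dots> \<le> 2 * real a"
    using card_mono[of "{..<a}" "{..n} \<inter> {i. i < a}"] by auto
  finally show ?thesis .
qed

lemma abs_cesaro_mean_double_exp_blocks:
  "\<bar>cesaro_mean double_exp_blocks (2 ^ 2 ^ Suc j - 1) - (-1) ^ j\<bar> \<le> 2 / real (Suc j)"
proof -
  define a :: nat where "a = 2 ^ 2 ^ j"
  define n :: nat where "n = 2 ^ 2 ^ Suc j - 1"
  have square: "2 ^ 2 ^ Suc j = a * a"
    unfolding a_def by (simp flip: power_add mult_2)
  then have n: "Suc n = a * a"
    unfolding n_def by (simp add: a_def)
  have "Suc j \<le> 2 ^ j"
    by (rule Suc_leI[OF less_exp])
  also have "(2::nat) ^ j \<le> a"
    using less_exp[of "2 ^ j"] unfolding a_def by simp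
  finally have "Suc j \<le> a" .
  have "\<bar>(\<Sum>i\<le>n. double_exp_blocks i) - real (Suc n) * (-1) ^ j\<bar> \<le> 2 * real a"
    using n square by (intro abs_sum_minus_const_le double_exp_blocks_eq) (auto simp: a_def)
  then have "\<bar>cesaro_mean double_exp_blocks n - (-1) ^ j\<bar> \<le> 2 * real a / (real a * real a)"
    unfolding cesaro_mean_def n using \<open>Suc j \<le> a\<close> by (simp add: field_simps)
  also have "\<dots> \<le> 2 / real (Suc j)"
    using \<open>Suc j \<le> a\<close> by (simp add: frac_le)
  finally show ?thesis
    unfolding n_def .
qed

lemma tendsto_cesaro_mean_double_exp_blocks:
  "(\<lambda>k. cesaro_mean double_exp_blocks (2 ^ 2 ^ Suc (2 * k + e) - 1)) \<longlonglongrightarrow> (-1) ^ e"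
proof -
  have bound: "\<bar>cesaro_mean double_exp_blocks (2 ^ 2 ^ Suc (2 * k + e) - 1) - (-1) ^ e\<bar>
      \<le> 2 / real (Suc k)" for k
  proof -
    have "\<bar>cesaro_mean double_exp_blocks (2 ^ 2 ^ Suc (2 * k + e) - 1) - (-1) ^ e\<bar>
        \<le> 2 / real (Suc (2 * k + e))"
      using abs_cesaro_mean_double_exp_blocks[of "2 * k + e"] by (simp add: power_add)
    also have "\<dots> \<le> 2 / real (Suc k)"
      by (intro divide_left_mono) auto
    finally show ?thesis .
  qed
  have "(\<lambda>k. cesaro_mean double_exp_blocks (2 ^ 2 ^ Suc (2 * k + e) - 1) - (-1) ^ e) \<longlonglongrightarrow> 0"
  proof (rule Lim_null_comparison)
    show "eventually (\<lambda>k. norm (cesaro_mean double_exp_blocks (2 ^ 2 ^ Suc (2 * k + e) - 1) - (-1) ^ e)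
        \<le> 2 / real (Suc k)) sequentially"
      using bound by (intro always_eventually allI) simp
    show "(\<lambda>k. 2 / real (Suc k)) \<longlonglongrightarrow> 0"
      using LIMSEQ_Suc[OF lim_const_over_n[of 2]] by simp
  qed
  then show ?thesis
    by (rule LIM_zero_cancel)
qed

lemma cluster_value_cesaro_mean_double_exp_blocks:
  "cluster_value (cesaro_mean double_exp_blocks) 1" "cluster_value (cesaro_mean double_exp_blocks) (-1)"
proof -
  have "strict_mono (\<lambda>k. 2 ^ 2 ^ Suc (2 * k + e) - 1 :: nat)" for e
  proof (rule strict_monoI_Suc)
    fix k
    have "(2::nat) ^ 2 ^ Suc (2 * k + e) < 2 ^ 2 ^ Suc (2 * Suc k + e)"
      by simp
    then show "2 ^ 2 ^ Suc (2 * k + e) - 1 < (2 ^ 2 ^ Suc (2 * Suc k + e) - 1 :: nat)"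
      by (simp add: diff_less_mono)
  qed
  then have "cluster_value (cesaro_mean double_exp_blocks) ((-1) ^ e)" for e
    unfolding cluster_value_def using tendsto_cesaro_mean_double_exp_blocks by blast
  from this[of 0] this[of 1]
  show "cluster_value (cesaro_mean double_exp_blocks) 1" "cluster_value (cesaro_mean double_exp_blocks) (-1)"
    by simp_all
qed

lemma seq_c_strongly_lower_porous_in_c_hat: "strongly_lower_porous c_hat supdist seq_c"
proof (rule strongly_lower_porous_by_oscillation[where T = "\<lambda>x. x" and h = alternating])
  show "alternating \<in> c_hat"
    using alternating_in_c0_hat c0_hat_subset_c_hat ..
  show "convergent x" if "x \<in> seq_c" for x
    using that by (simp add: seq_c_def)
qed (simp_all add: c_hat_subset_linf lincomb_closed_c_hat seq_c_subset_c_hat alternating_def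
    cluster_value_alternating)

lemma seq_c0_strongly_lower_porous_in_c0_hat: "strongly_lower_porous c0_hat supdist seq_c0"
proof (rule strongly_lower_porous_by_oscillation[where T = "\<lambda>x. x" and h = alternating])
  show "convergent x" if "x \<in> seq_c0" for x
    using that by (auto simp: seq_c0_def intro: convergentI)
qed (simp_all add: c0_hat_subset_linf lincomb_closed_c0_hat seq_c0_subset_c0_hat
    alternating_in_c0_hat alternating_def cluster_value_alternating)

lemma c_hat_strongly_lower_porous_in_seq_S: "strongly_lower_porous seq_S supdist c_hat"
proof (rule strongly_lower_porous_by_oscillation[where T = "window_mean power2" and h = square_blocks])
  show "square_blocks \<in> seq_S"
    using square_blocks_in_seq_S0 seq_S0_subset_seq_S ..
qed (simp_all add: seq_S_subset_linf lincomb_closed_seq_S c_hat_subset_seq_S window_mean_lincomb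
    window_mean_abs_le convergent_window_mean_c_hat window_mean_square_blocks cluster_value_alternating)

lemma c0_hat_strongly_lower_porous_in_seq_S0: "strongly_lower_porous seq_S0 supdist c0_hat"
proof (rule strongly_lower_porous_by_oscillation[where T = "window_mean power2" and h = square_blocks])
  show "convergent (window_mean power2 x)" if "x \<in> c0_hat" for x
    using that c0_hat_subset_c_hat by (blast intro: convergent_window_mean_c_hat)
qed (simp_all add: seq_S0_subset_linf lincomb_closed_seq_S0 c0_hat_subset_seq_S0 square_blocks_in_seq_S0
    window_mean_lincomb window_mean_abs_le window_mean_square_blocks cluster_value_alternating)

lemma seq_S_strongly_lower_porous_in_linf: "strongly_lower_porous linf supdist seq_S"
proof (rule strongly_lower_porous_by_oscillation[where T = cesaro_mean and h = double_exp_blocks])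
  show "double_exp_blocks \<in> linf"
    by (rule linfI[of _ 1]) simp
  show "\<bar>cesaro_mean u n\<bar> \<le> \<delta>" if "\<And>i. \<bar>u i\<bar> \<le> \<delta>" for u \<delta> n
    using that unfolding cesaro_mean_eq_window_mean by (rule window_mean_abs_le)
  show "convergent (cesaro_mean x)" if "x \<in> seq_S" for x
    using that by (simp add: seq_S_def)
qed (simp_all add: seq_S_subset_linf lincomb_closed_linf cesaro_mean_lincomb
    cluster_value_cesaro_mean_double_exp_blocks)

theorem theorem2p6:
  shows "strongly_lower_porous c_hat supdist seq_c \<and>
         strongly_lower_porous c0_hat supdist seq_c0 \<and>
         strongly_lower_porous seq_S supdist c_hat \<and>
         strongly_lower_porous seq_S0 supdist c0_hat \<and>
         strongly_lower_porous linf supdist seq_S"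
  using seq_c_strongly_lower_porous_in_c_hat seq_c0_strongly_lower_porous_in_c0_hat
    c_hat_strongly_lower_porous_in_seq_S c0_hat_strongly_lower_porous_in_seq_S0
    seq_S_strongly_lower_porous_in_linf
  by blast

end
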